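(* Let $(S,\circ)$ be a right loop and let $L$ be the congruence on $S$ generated by $\{(x,\,x\theta^S f^S(y,z)) : x,y,z\in S\}\cup\{(x\circ y,\,y\circ x): x,y\in S\}$. Then $L$ is the smallest congruence on $S$ such that the quotient right loop $S/L$ is an abelian group.
   Context: A right loop is a set $S$ with a binary operation $\circ$ and an element $1$ such that $1\circ x=x\circ 1=x$ for all $x$, and for all $a,b\in S$ the equation $X\circ a=b$ has a unique solution in $S$. A congruence on $S$ is an equivalence relation on $S$ which is a right subloop of $S\times S$ (componentwise operation); for a congruence $R$ with class $T=R_1$ of $1$, the classes are $T\circ x$ and $S/R=\{T\circ x\}$ is a right loop with $(T\circ x)\circ(T\circ y)=T\circ(x\circ y)$. For $y,z\in S$, $f^S(y,z):S\to S$ sends $x$ to the unique $X\in S$ with $X\circ(y\circ z)=(x\circ y)\circ z$. $G_S$ is the subgroup of $\mathrm{Sym}(S)$ generated by all $f^S(y,z)$, and $x\theta^S h:=h(x)$ for $h\in G_S$. *)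

theory Defs
  imports "HOL-Algebra.Group"
begin

definition right_loop :: "'a set \<Rightarrow> ('a \<Rightarrow> 'a \<Rightarrow> 'a) \<Rightarrow> 'a \<Rightarrow> bool" where
  "right_loop S op e \<longleftrightarrow>
     e \<in> S \<and> (\<forall>x\<in>S. \<forall>y\<in>S. op x y \<in> S) \<and>
     (\<forall>x\<in>S. op e x = x \<and> op x e = x) \<and>
     (\<forall>a\<in>S. \<forall>b\<in>S. \<exists>!X. X \<in> S \<and> op X a = b)"

definition rdiv :: "'a set \<Rightarrow> ('a \<Rightarrow> 'a \<Rightarrow> 'a) \<Rightarrow> 'a \<Rightarrow> 'a \<Rightarrow> 'a" where
  "rdiv S op b a = (THE X. X \<in> S \<and> op X a = b)"

definition right_subloop :: "'a set \<Rightarrow> ('a \<Rightarrow> 'a \<Rightarrow> 'a) \<Rightarrow> 'a \<Rightarrow> 'a set \<Rightarrow> bool" where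
  "right_subloop S op e H \<longleftrightarrow>
     H \<subseteq> S \<and> e \<in> H \<and> (\<forall>x\<in>H. \<forall>y\<in>H. op x y \<in> H) \<and>
     (\<forall>a\<in>H. \<forall>b\<in>H. rdiv S op b a \<in> H)"

definition prod_op :: "('a \<Rightarrow> 'a \<Rightarrow> 'a) \<Rightarrow> 'a \<times> 'a \<Rightarrow> 'a \<times> 'a \<Rightarrow> 'a \<times> 'a" where
  "prod_op op p q = (op (fst p) (fst q), op (snd p) (snd q))"

definition congruence_rl :: "'a set \<Rightarrow> ('a \<Rightarrow> 'a \<Rightarrow> 'a) \<Rightarrow> 'a \<Rightarrow> ('a \<times> 'a) set \<Rightarrow> bool" where
  "congruence_rl S op e R \<longleftrightarrow> equiv S R \<and> right_subloop (S \<times> S) (prod_op op) (e, e) R"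

definition cong_gen :: "'a set \<Rightarrow> ('a \<Rightarrow> 'a \<Rightarrow> 'a) \<Rightarrow> 'a \<Rightarrow> ('a \<times> 'a) set \<Rightarrow> ('a \<times> 'a) set" where
  "cong_gen S op e G = \<Inter>{R. congruence_rl S op e R \<and> G \<subseteq> R}"

definition fS :: "'a set \<Rightarrow> ('a \<Rightarrow> 'a \<Rightarrow> 'a) \<Rightarrow> 'a \<Rightarrow> 'a \<Rightarrow> 'a \<Rightarrow> 'a" where
  "fS S op y z x = rdiv S op (op (op x y) z) (op y z)"

definition thetaS :: "'a \<Rightarrow> ('a \<Rightarrow> 'a) \<Rightarrow> 'a" where
  "thetaS x h = h x"

text \<open>Quotient right loop S/R: classes T o x with T the class of e,
  operation (T o x)(T o y) = T o (x o y).\<close>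
definition rcoset_rl :: "('a \<Rightarrow> 'a \<Rightarrow> 'a) \<Rightarrow> 'a set \<Rightarrow> 'a \<Rightarrow> 'a set" where
  "rcoset_rl op T x = (\<lambda>t. op t x) ` T"

definition quot_rl :: "'a set \<Rightarrow> ('a \<Rightarrow> 'a \<Rightarrow> 'a) \<Rightarrow> 'a \<Rightarrow> ('a \<times> 'a) set \<Rightarrow> 'a set monoid" where
  "quot_rl S op e R =
    (let T = R `` {e} in
     \<lparr> carrier = {rcoset_rl op T x | x. x \<in> S},
       mult = (\<lambda>A B. rcoset_rl op T
                 (op (SOME x. x \<in> S \<and> A = rcoset_rl op T x)
                     (SOME y. y \<in> S \<and> B = rcoset_rl op T y))),
       one = rcoset_rl op T e \<rparr>)"

end

theory Submission
  imports Defs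
begin

text \<open>
  For a congruence R on a right loop S, the classes of R are exactly the
  cosets T \<circ> x of the class T of 1, so S/R is the set of R-classes with the induced
  operation.  Hence S/R is an abelian group iff R identifies (x \<circ> y) \<circ> z with
  x \<circ> (y \<circ> z) and x \<circ> y with y \<circ> x for all x, y, z (inverses come for free from
  right division).  Since right multiplication by a fixed element is invertible modulo
  a congruence, the associativity condition is equivalent to (x, x \<theta> f(y,z)) \<in> R,
  because x \<theta> f(y,z) \<circ> (y \<circ> z) = (x \<circ> y) \<circ> z.  So S/R is an abelian group iff R
  contains the generating set G of L.  Finally, congruences are closed under
  intersections, so L = cong_gen G is the least congruence containing G, and the
  theorem follows.
\<close>

locale rloop =
  fixes S :: "'a set" and op :: "'a \<Rightarrow> 'a \<Rightarrow> 'a" and e :: 'a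
  assumes rl: "right_loop S op e"
begin

lemma e_in: "e \<in> S"
  using rl by (simp add: right_loop_def)

lemma op_in: "x \<in> S \<Longrightarrow> y \<in> S \<Longrightarrow> op x y \<in> S"
  using rl by (simp add: right_loop_def)

lemma lid: "x \<in> S \<Longrightarrow> op e x = x"
  using rl by (simp add: right_loop_def)

lemma unique_right_quotient: "a \<in> S \<Longrightarrow> b \<in> S \<Longrightarrow> \<exists>!X. X \<in> S \<and> op X a = b"
  using rl by (simp add: right_loop_def)

lemma rdiv_prop:
  assumes "a \<in> S" "b \<in> S"
  shows "rdiv S op b a \<in> S \<and> op (rdiv S op b a) a = b"
  unfolding rdiv_def by (rule theI') (rule unique_right_quotient[OF assms])

lemma rdiv_in: "a \<in> S \<Longrightarrow> b \<in> S \<Longrightarrow> rdiv S op b a \<in> S"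
  using rdiv_prop by blast

lemma rdiv_eq: "a \<in> S \<Longrightarrow> b \<in> S \<Longrightarrow> op (rdiv S op b a) a = b"
  using rdiv_prop by blast

lemma rdiv_uniq:
  assumes "a \<in> S" "X \<in> S"
  shows "rdiv S op (op X a) a = X"
  using unique_right_quotient[OF assms(1) op_in[OF assms(2,1)]]
    rdiv_prop[OF assms(1) op_in[OF assms(2,1)]] assms(2) by blast

text \<open>Right division in S \<times> S is computed componentwise; this links congruences
  (right subloops of S \<times> S) with closure under right division in S.\<close>

lemma rdiv_prod:
  assumes "a \<in> S \<times> S" "b \<in> S \<times> S"
  shows "rdiv (S \<times> S) (prod_op op) b a = (rdiv S op (fst b) (fst a), rdiv S op (snd b) (snd a))"
  unfolding rdiv_def[of "S \<times> S"]
proof (rule the_equality)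
  show "(rdiv S op (fst b) (fst a), rdiv S op (snd b) (snd a)) \<in> S \<times> S \<and>
    prod_op op (rdiv S op (fst b) (fst a), rdiv S op (snd b) (snd a)) a = b"
    using assms by (auto simp: prod_op_def rdiv_in rdiv_eq)
next
  fix X assume "X \<in> S \<times> S \<and> prod_op op X a = b"
  then show "X = (rdiv S op (fst b) (fst a), rdiv S op (snd b) (snd a))"
    using assms by (cases X) (auto simp: prod_op_def rdiv_uniq)
qed

lemma fS_in: "x \<in> S \<Longrightarrow> y \<in> S \<Longrightarrow> z \<in> S \<Longrightarrow> fS S op y z x \<in> S"
  unfolding fS_def by (simp add: rdiv_in op_in)

lemma fS_eq: "x \<in> S \<Longrightarrow> y \<in> S \<Longrightarrow> z \<in> S \<Longrightarrow> op (fS S op y z x) (op y z) = op (op x y) z"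
  unfolding fS_def by (simp add: rdiv_eq op_in)

lemma congruenceI:
  assumes "R \<subseteq> S \<times> S" "\<And>x. x \<in> S \<Longrightarrow> (x,x) \<in> R" "\<And>x y. (x,y) \<in> R \<Longrightarrow> (y,x) \<in> R"
    "\<And>x y z. (x,y) \<in> R \<Longrightarrow> (y,z) \<in> R \<Longrightarrow> (x,z) \<in> R"
    "\<And>a b c d. (a,b) \<in> R \<Longrightarrow> (c,d) \<in> R \<Longrightarrow> (op a c, op b d) \<in> R"
    "\<And>a b c d. (a,b) \<in> R \<Longrightarrow> (c,d) \<in> R \<Longrightarrow> (rdiv S op c a, rdiv S op d b) \<in> R"
  shows "congruence_rl S op e R"
  unfolding congruence_rl_def right_subloop_def
proof (intro conjI ballI)
  show "equiv S R"
  proof (rule equivI)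
    show "R \<subseteq> S \<times> S" by fact
    show "refl_on S R" unfolding refl_on_def using assms(1,2) by blast
    show "sym R" unfolding sym_def using assms(3) by blast
    show "trans R" unfolding trans_def using assms(4) by blast
  qed
  show "R \<subseteq> S \<times> S" "(e, e) \<in> R" using assms(1,2) e_in by auto
  fix p q assume pR: "p \<in> R" and qR: "q \<in> R"
  obtain a b c d where pq: "p = (a,b)" "q = (c,d)" by (cases p, cases q)
  show "prod_op op p q \<in> R"
    using assms(5) pR qR pq by (simp add: prod_op_def)
  have "p \<in> S \<times> S" "q \<in> S \<times> S" using pR qR assms(1) by auto
  then show "rdiv (S \<times> S) (prod_op op) q p \<in> R"
    using assms(6) pR qR pq by (simp add: rdiv_prod)
qed

context
  fixes R assumes cR: "congruence_rl S op e R"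
begin

lemma eqR: "equiv S R"
  using cR by (simp add: congruence_rl_def)

lemma R_sub: "R \<subseteq> S \<times> S"
  using eqR by (simp add: equiv_def)

lemma R_in: "(x,y) \<in> R \<Longrightarrow> x \<in> S \<and> y \<in> S"
  using R_sub by blast

lemma R_refl: "x \<in> S \<Longrightarrow> (x,x) \<in> R"
  using eqR by (simp add: equiv_def refl_on_def)

lemma R_sym: "(x,y) \<in> R \<Longrightarrow> (y,x) \<in> R"
  using eqR by (auto simp: equiv_def sym_def)

lemma R_trans: "(x,y) \<in> R \<Longrightarrow> (y,z) \<in> R \<Longrightarrow> (x,z) \<in> R"
  using eqR by (auto simp: equiv_def trans_def)

lemma R_op:
  assumes "(a,b) \<in> R" "(c,d) \<in> R"
  shows "(op a c, op b d) \<in> R"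
proof -
  have "prod_op op (a,b) (c,d) \<in> R"
    using cR assms unfolding congruence_rl_def right_subloop_def by blast
  then show ?thesis by (simp add: prod_op_def)
qed

lemma R_div:
  assumes "(a,b) \<in> R" "(c,d) \<in> R"
  shows "(rdiv S op c a, rdiv S op d b) \<in> R"
proof -
  have "rdiv (S \<times> S) (prod_op op) (c,d) (a,b) \<in> R"
    using cR assms unfolding congruence_rl_def right_subloop_def by blast
  then show ?thesis
    using assms R_in by (subst (asm) rdiv_prod) auto
qed

lemma R_right_cancel:
  assumes "a \<in> S" "b \<in> S" "c \<in> S"
  shows "(op a c, op b c) \<in> R \<longleftrightarrow> (a,b) \<in> R"
proof
  assume "(op a c, op b c) \<in> R"
  from R_div[OF R_refl[OF assms(3)] this] show "(a,b) \<in> R"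
    using assms by (simp add: rdiv_uniq)
qed (rule R_op[OF _ R_refl[OF assms(3)]])

lemma coset_eq_class:
  assumes "x \<in> S"
  shows "rcoset_rl op (R``{e}) x = R``{x}"
proof
  show "rcoset_rl op (R``{e}) x \<subseteq> R``{x}"
  proof
    fix u assume "u \<in> rcoset_rl op (R``{e}) x"
    then obtain t where t: "(e,t) \<in> R" "u = op t x" by (auto simp: rcoset_rl_def)
    have "(op e x, op t x) \<in> R" using R_op[OF t(1) R_refl[OF assms]] .
    then show "u \<in> R``{x}" using t assms lid by simp
  qed
  show "R``{x} \<subseteq> rcoset_rl op (R``{e}) x"
  proof
    fix y assume "y \<in> R``{x}"
    then have xy: "(x,y) \<in> R" by simp
    then have yS: "y \<in> S" using R_in by blast
    have "(rdiv S op x x, rdiv S op y x) \<in> R" using R_div[OF R_refl[OF assms] xy] .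
    moreover have "rdiv S op x x = e" using rdiv_uniq[OF assms e_in] assms by (simp add: lid)
    ultimately have "(e, rdiv S op y x) \<in> R" by simp
    moreover have "y = op (rdiv S op y x) x" using rdiv_eq[OF assms yS] by simp
    ultimately show "y \<in> rcoset_rl op (R``{e}) x" unfolding rcoset_rl_def by blast
  qed
qed

lemma class_eq_iff: "x \<in> S \<Longrightarrow> y \<in> S \<Longrightarrow> R``{x} = R``{y} \<longleftrightarrow> (x,y) \<in> R"
  using eq_equiv_class_iff[OF eqR] .

lemma quot_carrier: "carrier (quot_rl S op e R) = (\<lambda>x. R``{x}) ` S"
  by (auto simp: quot_rl_def Let_def coset_eq_class) (metis coset_eq_class)

lemma quot_one: "one (quot_rl S op e R) = R``{e}"
  by (simp add: quot_rl_def Let_def coset_eq_class e_in)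

lemma quot_mult:
  assumes "x \<in> S" "y \<in> S"
  shows "mult (quot_rl S op e R) (R``{x}) (R``{y}) = R``{op x y}"
proof -
  let ?T = "R``{e}"
  define x' where "x' = (SOME x'. x' \<in> S \<and> R``{x} = rcoset_rl op ?T x')"
  define y' where "y' = (SOME y'. y' \<in> S \<and> R``{y} = rcoset_rl op ?T y')"
  have "x' \<in> S \<and> R``{x} = rcoset_rl op ?T x'" unfolding x'_def
    by (rule someI[of _ x]) (simp add: assms coset_eq_class)
  then have x': "x' \<in> S" "(x,x') \<in> R" using coset_eq_class class_eq_iff assms by auto
  have "y' \<in> S \<and> R``{y} = rcoset_rl op ?T y'" unfolding y'_def
    by (rule someI[of _ y]) (simp add: assms coset_eq_class)
  then have y': "y' \<in> S" "(y,y') \<in> R" using coset_eq_class class_eq_iff assms by auto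
  have "mult (quot_rl S op e R) (R``{x}) (R``{y}) = rcoset_rl op ?T (op x' y')"
    by (simp add: quot_rl_def Let_def x'_def y'_def)
  also have "\<dots> = R``{op x' y'}" using coset_eq_class op_in x' y' by simp
  also have "\<dots> = R``{op x y}"
    using R_sym[OF R_op[OF x'(2) y'(2)]] class_eq_iff op_in assms x' y' by simp
  finally show ?thesis .
qed

text \<open>S/R is an abelian group iff R identifies (x \<circ> y) \<circ> z with x \<circ> (y \<circ> z) and
  x \<circ> y with y \<circ> x; the inverse of the class of x is the class of 1 / x.\<close>

lemma quot_comm_group_iff:
  "comm_group (quot_rl S op e R) \<longleftrightarrow>
     (\<forall>x\<in>S. \<forall>y\<in>S. \<forall>z\<in>S. (op (op x y) z, op x (op y z)) \<in> R) \<and>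
     (\<forall>x\<in>S. \<forall>y\<in>S. (op x y, op y x) \<in> R)"
  (is "?G \<longleftrightarrow> ?A \<and> ?C")
proof
  assume ?G
  then interpret Q: comm_group "quot_rl S op e R" .
  have cls: "R``{u} \<in> carrier (quot_rl S op e R)" if "u \<in> S" for u
    using that by (simp add: quot_carrier)
  show "?A \<and> ?C"
  proof (intro conjI ballI)
    fix x y z assume "x \<in> S" "y \<in> S" "z \<in> S"
    with Q.m_assoc[OF cls cls cls] show "(op (op x y) z, op x (op y z)) \<in> R"
      by (simp add: quot_mult op_in class_eq_iff)
  next
    fix x y assume "x \<in> S" "y \<in> S"
    with Q.m_comm[OF cls cls] show "(op x y, op y x) \<in> R"
      by (simp add: quot_mult op_in class_eq_iff)
  qed
next
  assume "?A \<and> ?C"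
  then have A: ?A and C: ?C by blast+
  show ?G
  proof (rule comm_groupI)
    fix a b assume "a \<in> carrier (quot_rl S op e R)" "b \<in> carrier (quot_rl S op e R)"
    then obtain x y where "x \<in> S" "y \<in> S" "a = R``{x}" "b = R``{y}"
      by (auto simp: quot_carrier)
    then show "mult (quot_rl S op e R) a b \<in> carrier (quot_rl S op e R)"
      and "mult (quot_rl S op e R) a b = mult (quot_rl S op e R) b a"
      using C by (auto simp: quot_mult quot_carrier op_in class_eq_iff)
  next
    fix a b c assume "a \<in> carrier (quot_rl S op e R)" "b \<in> carrier (quot_rl S op e R)"
      "c \<in> carrier (quot_rl S op e R)"
    then obtain x y z where "x \<in> S" "y \<in> S" "z \<in> S" "a = R``{x}" "b = R``{y}" "c = R``{z}"
      by (auto simp: quot_carrier)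
    then show "mult (quot_rl S op e R) (mult (quot_rl S op e R) a b) c =
           mult (quot_rl S op e R) a (mult (quot_rl S op e R) b c)"
      using A by (auto simp: quot_mult op_in class_eq_iff)
  next
    show "one (quot_rl S op e R) \<in> carrier (quot_rl S op e R)"
      by (simp add: quot_one quot_carrier e_in)
  next
    fix a assume "a \<in> carrier (quot_rl S op e R)"
    then obtain x where x: "x \<in> S" "a = R``{x}" by (auto simp: quot_carrier)
    then show "mult (quot_rl S op e R) (one (quot_rl S op e R)) a = a"
      by (simp add: quot_one quot_mult e_in lid)
    have "R``{rdiv S op e x} \<in> carrier (quot_rl S op e R)"
      and "mult (quot_rl S op e R) (R``{rdiv S op e x}) a = one (quot_rl S op e R)"
      using x e_in by (simp_all add: quot_carrier quot_mult quot_one rdiv_in rdiv_eq)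
    then show "\<exists>b \<in> carrier (quot_rl S op e R). mult (quot_rl S op e R) b a = one (quot_rl S op e R)"
      by blast
  qed
qed

lemma fS_pair_iff_assoc:
  assumes "x \<in> S" "y \<in> S" "z \<in> S"
  shows "(x, fS S op y z x) \<in> R \<longleftrightarrow> (op (op x y) z, op x (op y z)) \<in> R"
proof -
  have "(x, fS S op y z x) \<in> R \<longleftrightarrow> (op x (op y z), op (fS S op y z x) (op y z)) \<in> R"
    using assms by (simp add: R_right_cancel fS_in op_in)
  also have "\<dots> \<longleftrightarrow> (op (op x y) z, op x (op y z)) \<in> R"
    using assms R_sym by (auto simp: fS_eq)
  finally show ?thesis .
qed

end

lemma Inter_congruence:
  assumes "F \<noteq> {}" "\<And>R. R \<in> F \<Longrightarrow> congruence_rl S op e R"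
  shows "congruence_rl S op e (\<Inter>F)"
proof (rule congruenceI)
  obtain R0 where "R0 \<in> F" using assms(1) by blast
  then show "\<Inter>F \<subseteq> S \<times> S" using R_sub[OF assms(2)] by blast
next
  fix x assume "x \<in> S" then show "(x,x) \<in> \<Inter>F" using R_refl[OF assms(2)] by blast
next
  fix x y assume "(x,y) \<in> \<Inter>F" then show "(y,x) \<in> \<Inter>F" using R_sym[OF assms(2)] by blast
next
  fix x y z assume "(x,y) \<in> \<Inter>F" "(y,z) \<in> \<Inter>F" then show "(x,z) \<in> \<Inter>F"
    using R_trans[OF assms(2)] by blast
next
  fix a b c d assume "(a,b) \<in> \<Inter>F" "(c,d) \<in> \<Inter>F" then show "(op a c, op b d) \<in> \<Inter>F"
    using R_op[OF assms(2)] by blast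
next
  fix a b c d assume "(a,b) \<in> \<Inter>F" "(c,d) \<in> \<Inter>F"
  then show "(rdiv S op c a, rdiv S op d b) \<in> \<Inter>F" using R_div[OF assms(2)] by blast
qed

lemma cong_gen_congruence:
  assumes "G \<subseteq> S \<times> S"
  shows "congruence_rl S op e (cong_gen S op e G)"
proof -
  have "congruence_rl S op e (S \<times> S)"
    by (rule congruenceI) (auto simp: op_in rdiv_in)
  then show ?thesis
    unfolding cong_gen_def using assms by (intro Inter_congruence) auto
qed

lemma cong_gen_incl: "G \<subseteq> cong_gen S op e G"
  unfolding cong_gen_def by blast

lemma cong_gen_least: "congruence_rl S op e R \<Longrightarrow> G \<subseteq> R \<Longrightarrow> cong_gen S op e G \<subseteq> R"
  unfolding cong_gen_def by blast

lemma quot_comm_group_iff_generators: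
  assumes R: "congruence_rl S op e R"
  shows "comm_group (quot_rl S op e R) \<longleftrightarrow>
    {(x, thetaS x (fS S op y z)) | x y z. x \<in> S \<and> y \<in> S \<and> z \<in> S}
      \<union> {(op x y, op y x) | x y. x \<in> S \<and> y \<in> S} \<subseteq> R"
proof -
  have "{(x, thetaS x (fS S op y z)) | x y z. x \<in> S \<and> y \<in> S \<and> z \<in> S} \<subseteq> R \<longleftrightarrow>
        (\<forall>x\<in>S. \<forall>y\<in>S. \<forall>z\<in>S. (x, fS S op y z x) \<in> R)"
    by (auto simp: thetaS_def)
  moreover have "{(op x y, op y x) | x y. x \<in> S \<and> y \<in> S} \<subseteq> R \<longleftrightarrow>
        (\<forall>x\<in>S. \<forall>y\<in>S. (op x y, op y x) \<in> R)"
    by auto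
  ultimately show ?thesis
    by (simp add: quot_comm_group_iff[OF R] fS_pair_iff_assoc[OF R])
qed

end

theorem mainTheorem6:
  fixes S :: "'a set" and op :: "'a \<Rightarrow> 'a \<Rightarrow> 'a" and e :: 'a
  assumes "right_loop S op e"
  defines "L \<equiv> cong_gen S op e
             ({(x, thetaS x (fS S op y z)) | x y z. x \<in> S \<and> y \<in> S \<and> z \<in> S}
              \<union> {(op x y, op y x) | x y. x \<in> S \<and> y \<in> S})"
  shows "congruence_rl S op e L \<and> comm_group (quot_rl S op e L) \<and>
         (\<forall>R. congruence_rl S op e R \<and> comm_group (quot_rl S op e R) \<longrightarrow> L \<subseteq> R)"
proof -
  interpret rloop S op e by unfold_locales (rule assms(1))
  define G where "G = {(x, thetaS x (fS S op y z)) | x y z. x \<in> S \<and> y \<in> S \<and> z \<in> S}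
              \<union> {(op x y, op y x) | x y. x \<in> S \<and> y \<in> S}"
  have L_eq: "L = cong_gen S op e G"
    by (simp add: L_def G_def)
  have "G \<subseteq> S \<times> S"
    unfolding G_def thetaS_def using fS_in op_in by auto
  then have cL: "congruence_rl S op e L"
    unfolding L_eq by (rule cong_gen_congruence)
  have "G \<subseteq> L"
    unfolding L_eq by (rule cong_gen_incl)
  then have "comm_group (quot_rl S op e L)"
    using quot_comm_group_iff_generators[OF cL] by (simp add: G_def)
  moreover have "L \<subseteq> R" if "congruence_rl S op e R" "comm_group (quot_rl S op e R)" for R
  proof -
    have "G \<subseteq> R" using that quot_comm_group_iff_generators[OF that(1)] by (simp add: G_def)
    then show ?thesis unfolding L_eq by (rule cong_gen_least[OF that(1)])
  qed
  ultimately show ?thesis using cL by blast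
qed

end
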